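(* Let $1\le q\le p<\infty$, $m\in\mathbb{N}$, and let $E_1,\dots,E_m,F$ be Banach spaces over $\mathbb{K}=\mathbb{R}$ or $\mathbb{C}$. Then $$\eta^{m\text{-}mult}_{(p,q)}(E_1,\dots,E_m;F)\le\frac mp\ \text{ for } 1\le q\le 2,\qquad \eta^{m\text{-}mult}_{(p,q)}(E_1,\dots,E_m;F)\le\frac{mq}{2p}\ \text{ for } q\ge2.$$
   Context: For vectors $x_1,\dots,x_n$ in a Banach space $E$ and $q>0$, $\|(x_k)_{k=1}^n\|_{w,q}:=\sup_{\varphi\in B_{E^*}}\left(\sum_{k=1}^n|\varphi(x_k)|^q\right)^{1/q}$, where $B_{E^*}$ is the closed unit ball of the dual. $\mathcal{L}(E_1,\dots,E_m;F)$ is the space of bounded $m$-linear maps. For $p,q>0$, the multilinear $m$-index of $(p,q)$-summability $\eta^{m\text{-}mult}_{(p,q)}(E_1,\dots,E_m;F)$ is the infimum of all real numbers $s$ with the property: for every $T\in\mathcal{L}(E_1,\dots,E_m;F)$ there is a constant $C\ge0$ (depending only on $m$ and $T$) such that $$\left(\sum_{k_1,\dots,k_m=1}^n\|T(x^{(1)}_{k_1},\dots,x^{(m)}_{k_m})\|^p\right)^{1/p}\le C n^{s}\prod_{i=1}^m\|(x^{(i)}_{k})_{k=1}^n\|_{w,q}$$ for all positive integers $n$ and all $x^{(i)}_k\in E_i$, $1\le k\le n$, $1\le i\le m$. *)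

theory Defs
  imports "HOL-Analysis.Analysis" "HOL-Library.Extended_Real"
begin

text \<open>Scalar field K (real or complex) acting on a real Banach space: a K-normed
  vector space structure extending the real one.\<close>
definition kscal :: "('k::real_normed_field \<Rightarrow> 'a::real_normed_vector \<Rightarrow> 'a) \<Rightarrow> bool" where
  "kscal sm \<longleftrightarrow>
     (\<forall>r x. sm (of_real r) x = r *\<^sub>R x) \<and>
     (\<forall>a x y. sm a (x + y) = sm a x + sm a y) \<and>
     (\<forall>a b x. sm (a + b) x = sm a x + sm b x) \<and>
     (\<forall>a b x. sm a (sm b x) = sm (a * b) x) \<and>
     (\<forall>a x. norm (sm a x) = norm a * norm x)"

definition ksubspace :: "('k::real_normed_field \<Rightarrow> 'a::real_normed_vector \<Rightarrow> 'a) \<Rightarrow> 'a set \<Rightarrow> bool" where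
  "ksubspace sm S \<longleftrightarrow> 0 \<in> S \<and> (\<forall>x\<in>S. \<forall>y\<in>S. x + y \<in> S) \<and> (\<forall>c. \<forall>x\<in>S. sm c x \<in> S)"

text \<open>A family E_0,...,E_{m-1} of K-Banach spaces, realised as closed K-subspaces of a
  common K-Banach space.\<close>
definition banach_family :: "('k::real_normed_field \<Rightarrow> 'a::banach \<Rightarrow> 'a) \<Rightarrow> (nat \<Rightarrow> 'a set) \<Rightarrow> nat \<Rightarrow> bool" where
  "banach_family sm E m \<longleftrightarrow> kscal sm \<and> (\<forall>i<m. closed (E i) \<and> ksubspace sm (E i))"

definition dual_ball :: "('k::real_normed_field \<Rightarrow> 'a::real_normed_vector \<Rightarrow> 'a) \<Rightarrow> 'a set \<Rightarrow> ('a \<Rightarrow> 'k) set" where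
  "dual_ball sm S = {\<phi>. (\<forall>x\<in>S. \<forall>y\<in>S. \<phi> (x + y) = \<phi> x + \<phi> y) \<and>
                        (\<forall>c. \<forall>x\<in>S. \<phi> (sm c x) = c * \<phi> x) \<and>
                        (\<forall>x\<in>S. norm (\<phi> x) \<le> norm x)}"

definition weak_norm :: "('k::real_normed_field \<Rightarrow> 'a::real_normed_vector \<Rightarrow> 'a) \<Rightarrow> 'a set \<Rightarrow> real \<Rightarrow> (nat \<Rightarrow> 'a) \<Rightarrow> nat \<Rightarrow> real" where
  "weak_norm sm S q x n = (SUP \<phi>\<in>dual_ball sm S. (\<Sum>k<n. norm (\<phi> (x k)) powr q) powr (1/q))"

text \<open>Bounded m-linear maps E_0 x ... x E_{m-1} -> F (F the whole type 'b); arguments are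
  extensional tuples in PiE {..<m} E.\<close>
definition bounded_mlinear ::
  "('k::real_normed_field \<Rightarrow> 'a::real_normed_vector \<Rightarrow> 'a) \<Rightarrow> (nat \<Rightarrow> 'a set) \<Rightarrow> nat \<Rightarrow>
   ('k \<Rightarrow> 'b::real_normed_vector \<Rightarrow> 'b) \<Rightarrow> ((nat \<Rightarrow> 'a) \<Rightarrow> 'b) \<Rightarrow> bool" where
  "bounded_mlinear sm E m smF T \<longleftrightarrow>
     (\<forall>x\<in>PiE {..<m} E. \<forall>i<m. \<forall>y\<in>E i.
        T (x(i := x i + y)) = T x + T (x(i := y))) \<and>
     (\<forall>x\<in>PiE {..<m} E. \<forall>i<m. \<forall>c.
        T (x(i := sm c (x i))) = smF c (T x)) \<and>
     (\<exists>C. \<forall>x\<in>PiE {..<m} E. norm (T x) \<le> C * (\<Prod>i<m. norm (x i)))"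

definition eta_mult ::
  "('k::real_normed_field \<Rightarrow> 'a::real_normed_vector \<Rightarrow> 'a) \<Rightarrow> (nat \<Rightarrow> 'a set) \<Rightarrow>
   ('k \<Rightarrow> 'b::real_normed_vector \<Rightarrow> 'b) \<Rightarrow> nat \<Rightarrow> real \<Rightarrow> real \<Rightarrow> ereal" where
  "eta_mult sm E smF m p q = Inf (ereal ` {s::real.
     \<forall>T. bounded_mlinear sm E m smF T \<longrightarrow>
       (\<exists>C\<ge>0. \<forall>n::nat. \<forall>xs::nat \<Rightarrow> nat \<Rightarrow> 'a. n \<ge> 1 \<longrightarrow> (\<forall>i<m. \<forall>k<n. xs i k \<in> E i) \<longrightarrow>
          (\<Sum>k\<in>PiE {..<m} (\<lambda>_. {..<n}). norm (T (\<lambda>i\<in>{..<m}. xs i (k i))) powr p) powr (1/p)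
            \<le> C * real n powr s * (\<Prod>i<m. weak_norm sm (E i) q (xs i) n))})"

end

theory Submission
  imports Defs
begin

text \<open>Every term \<open>\<parallel>T(x\<^sup>1\<^sub>k\<^sub>1, \<dots>, x\<^sup>m\<^sub>k\<^sub>m)\<parallel>\<close> of the sum is at most \<open>\<parallel>T\<parallel> \<Prod>\<^sub>i \<parallel>x\<^sup>i\<^sub>k\<^sub>i\<parallel>\<close>, and
  \<open>\<parallel>x\<^sub>k\<parallel> \<le> \<parallel>(x\<^sub>j)\<parallel>\<^sub>w\<^sub>,\<^sub>q\<close> because the dual unit ball is norming (Hahn--Banach, obtained from Zorn's
  lemma applied to graphs of norm-dominated functionals; over \<open>\<complex>\<close> one takes
  \<open>\<phi> = f - \<i> f(\<i> \<cdot>)\<close>). Summing the \<open>n\<^sup>m\<close> terms gives the exponent \<open>m/p\<close> for all \<open>p, q > 0\<close>,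
  and \<open>m/p \<le> mq/(2p)\<close> when \<open>q \<ge> 2\<close>.\<close>

text \<open>A real-linear functional on a linear subspace of \<open>S\<close>, dominated by the norm, encoded
  by its graph so that Zorn's lemma can be applied to set inclusion.\<close>
definition dominated_linear_graph :: "'a::real_normed_vector set \<Rightarrow> ('a \<times> real) set \<Rightarrow> bool" where
  "dominated_linear_graph S G \<longleftrightarrow> G \<subseteq> S \<times> UNIV \<and>
     (\<forall>a u b v. (a, u) \<in> G \<longrightarrow> (b, v) \<in> G \<longrightarrow> (a + b, u + v) \<in> G) \<and>
     (\<forall>a u c. (a, u) \<in> G \<longrightarrow> (c *\<^sub>R a, c * u) \<in> G) \<and>
     (\<forall>a u. (a, u) \<in> G \<longrightarrow> u \<le> norm a)"

context
  fixes S :: "'a::real_normed_vector set" and G :: "('a \<times> real) set"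
  assumes G: "dominated_linear_graph S G"
begin

lemma dominated_linear_graph_subset: "(a, u) \<in> G \<Longrightarrow> a \<in> S"
  and dominated_linear_graph_add: "(a, u) \<in> G \<Longrightarrow> (b, v) \<in> G \<Longrightarrow> (a + b, u + v) \<in> G"
  and dominated_linear_graph_scale: "(a, u) \<in> G \<Longrightarrow> (c *\<^sub>R a, c * u) \<in> G"
  and dominated_linear_graph_le_norm: "(a, u) \<in> G \<Longrightarrow> u \<le> norm a"
  using G unfolding dominated_linear_graph_def by blast+

lemma dominated_linear_graph_unique:
  assumes "(a, u) \<in> G" "(a, v) \<in> G" shows "u = v"
proof -
  have "(a + (- 1) *\<^sub>R a, u + (- 1) * v) \<in> G"
    using assms by (intro dominated_linear_graph_add dominated_linear_graph_scale)
  then have diff: "(0, u - v) \<in> G" by simp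
  then have "((- 1) *\<^sub>R 0, (- 1) * (u - v)) \<in> G" by (rule dominated_linear_graph_scale)
  then have "v - u \<le> 0" using dominated_linear_graph_le_norm by fastforce
  moreover have "u - v \<le> 0" using dominated_linear_graph_le_norm[OF diff] by simp
  ultimately show ?thesis by simp
qed

text \<open>The one-dimensional extension step: the new value \<open>c\<close> at \<open>y\<close> must satisfy
  \<open>v - \<parallel>b - y\<parallel> \<le> c \<le> \<parallel>a + y\<parallel> - u\<close> for all \<open>(a, u), (b, v) \<in> G\<close>,
  which is possible since \<open>v + u \<le> \<parallel>b + a\<parallel> \<le> \<parallel>b - y\<parallel> + \<parallel>a + y\<parallel>\<close>.\<close>
lemma dominated_linear_graph_separating_value:
  assumes "G \<noteq> {}"
  obtains c where "\<And>b v. (b, v) \<in> G \<Longrightarrow> v - norm (b - y) \<le> c"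
    and "\<And>a u. (a, u) \<in> G \<Longrightarrow> c \<le> norm (a + y) - u"
proof -
  define A where "A = {v - norm (b - y) | b v. (b, v) \<in> G}"
  have key: "v - norm (b - y) \<le> norm (a + y) - u" if "(b, v) \<in> G" "(a, u) \<in> G" for a b u v
  proof -
    have "v + u \<le> norm (b + a)"
      using that by (intro dominated_linear_graph_le_norm dominated_linear_graph_add)
    also have "\<dots> \<le> norm (b - y) + norm (a + y)"
      using norm_triangle_ineq[of "b - y" "a + y"] by simp
    finally show ?thesis by simp
  qed
  have "A \<noteq> {}" using assms unfolding A_def by auto
  moreover have "bdd_above A" unfolding A_def bdd_above_def using key assms by fast
  ultimately have "v - norm (b - y) \<le> Sup A" "Sup A \<le> norm (a + y) - u"
    if "(b, v) \<in> G" "(a, u) \<in> G" for a b u v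
    using that key by (auto simp: A_def intro!: cSup_upper cSup_least)
  with assms show ?thesis by (intro that[of "Sup A"]) auto
qed

lemma dominated_linear_graph_extension_value:
  assumes "G \<noteq> {}"
  obtains c where "\<And>a u t. (a, u) \<in> G \<Longrightarrow> u + t * c \<le> norm (a + t *\<^sub>R y)"
proof -
  obtain c where upper: "\<And>b v. (b, v) \<in> G \<Longrightarrow> v - norm (b - y) \<le> c"
    and lower: "\<And>a u. (a, u) \<in> G \<Longrightarrow> c \<le> norm (a + y) - u"
    using dominated_linear_graph_separating_value[OF assms] by blast
  have "u + t * c \<le> norm (a + t *\<^sub>R y)" if au: "(a, u) \<in> G" for a u t
  proof (cases t "0 :: real" rule: linorder_cases)
    case less
    have "(- 1 / t) * u - norm ((- 1 / t) *\<^sub>R a - y) \<le> c"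
      using upper[OF dominated_linear_graph_scale[OF au, of "- 1 / t"]] by simp
    then have "- t * ((- 1 / t) * u - norm ((- 1 / t) *\<^sub>R a - y)) \<le> - t * c"
      using less by (intro mult_left_mono) auto
    moreover have "- t * norm ((- 1 / t) *\<^sub>R a - y) = norm ((- t) *\<^sub>R ((- 1 / t) *\<^sub>R a - y))"
      using less by simp
    moreover have "(- t) *\<^sub>R ((- 1 / t) *\<^sub>R a - y) = a + t *\<^sub>R y"
      using less by (simp add: algebra_simps)
    ultimately show ?thesis using less by (simp add: algebra_simps)
  next
    case equal
    then show ?thesis using dominated_linear_graph_le_norm[OF au] by simp
  next
    case greater
    have "c \<le> norm ((1 / t) *\<^sub>R a + y) - (1 / t) * u"
      using lower[OF dominated_linear_graph_scale[OF au, of "1 / t"]] by simp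
    then have "t * c \<le> t * (norm ((1 / t) *\<^sub>R a + y) - (1 / t) * u)"
      using greater by simp
    moreover have "t * norm ((1 / t) *\<^sub>R a + y) = norm (t *\<^sub>R ((1 / t) *\<^sub>R a + y))"
      using greater by simp
    moreover have "t *\<^sub>R ((1 / t) *\<^sub>R a + y) = a + t *\<^sub>R y"
      using greater by (simp add: algebra_simps)
    ultimately show ?thesis using greater by (simp add: algebra_simps)
  qed
  then show ?thesis by (rule that)
qed

lemma dominated_linear_graph_adjoin:
  assumes "subspace S" "y \<in> S"
    and c: "\<And>a u t. (a, u) \<in> G \<Longrightarrow> u + t * c \<le> norm (a + t *\<^sub>R y)"
  shows "dominated_linear_graph S {(a + t *\<^sub>R y, u + t * c) | a u t. (a, u) \<in> G}"
    (is "dominated_linear_graph S ?G'")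
  unfolding dominated_linear_graph_def
proof (intro conjI allI impI)
  show "?G' \<subseteq> S \<times> UNIV"
    using assms(1,2) dominated_linear_graph_subset by (auto intro!: subspace_add subspace_scale)
next
  fix a u b v assume "(a, u) \<in> ?G'" "(b, v) \<in> ?G'"
  then obtain a1 u1 t1 a2 u2 t2 where "(a1, u1) \<in> G" "(a2, u2) \<in> G"
    "a = a1 + t1 *\<^sub>R y" "u = u1 + t1 * c" "b = a2 + t2 *\<^sub>R y" "v = u2 + t2 * c"
    by blast
  moreover have "(a1 + a2, u1 + u2) \<in> G"
    using calculation(1,2) by (rule dominated_linear_graph_add)
  then have "((a1 + a2) + (t1 + t2) *\<^sub>R y, (u1 + u2) + (t1 + t2) * c) \<in> ?G'" by blast
  ultimately show "(a + b, u + v) \<in> ?G'" by (simp add: algebra_simps)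
next
  fix a u d assume "(a, u) \<in> ?G'"
  then obtain a1 u1 t1 where "(a1, u1) \<in> G" "a = a1 + t1 *\<^sub>R y" "u = u1 + t1 * c"
    by blast
  moreover have "(d *\<^sub>R a1, d * u1) \<in> G"
    using calculation(1) by (rule dominated_linear_graph_scale)
  then have "(d *\<^sub>R a1 + (d * t1) *\<^sub>R y, d * u1 + (d * t1) * c) \<in> ?G'" by blast
  ultimately show "(d *\<^sub>R a, d * u) \<in> ?G'" by (simp add: algebra_simps)
next
  fix a u assume "(a, u) \<in> ?G'"
  then show "u \<le> norm a" using c by blast
qed

lemma dominated_linear_graph_extend:
  assumes "subspace S" "y \<in> S" "y \<notin> fst ` G" "G \<noteq> {}"
  obtains G' where "dominated_linear_graph S G'" "G \<subset> G'"
proof -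
  obtain c where c: "\<And>a u t. (a, u) \<in> G \<Longrightarrow> u + t * c \<le> norm (a + t *\<^sub>R y)"
    using dominated_linear_graph_extension_value[OF \<open>G \<noteq> {}\<close>] by blast
  define G' where "G' = {(a + t *\<^sub>R y, u + t * c) | a u t. (a, u) \<in> G}"
  have "G \<subseteq> G'"
  proof
    fix x assume "x \<in> G"
    moreover obtain a u where "x = (a, u)" by fastforce
    ultimately have "(a + 0 *\<^sub>R y, u + 0 * c) \<in> G'" unfolding G'_def by blast
    then show "x \<in> G'" using \<open>x = (a, u)\<close> by simp
  qed
  moreover obtain a u where "(a, u) \<in> G" using \<open>G \<noteq> {}\<close> by auto
  then have "(0, 0) \<in> G" using dominated_linear_graph_scale[of a u 0] by simp
  then have "(0 + 1 *\<^sub>R y, 0 + 1 * c) \<in> G'" unfolding G'_def by blast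
  then have "G' \<noteq> G" using assms(3) by force
  ultimately show ?thesis
    using that dominated_linear_graph_adjoin[OF assms(1,2) c] unfolding G'_def by auto
qed

end

lemma dominated_linear_graph_chain_Union:
  assumes "\<C> \<noteq> {}" "subset.chain {G. dominated_linear_graph S G} \<C>"
  shows "dominated_linear_graph S (\<Union>\<C>)"
  unfolding dominated_linear_graph_def
proof (intro conjI allI impI)
  have L: "\<And>G. G \<in> \<C> \<Longrightarrow> dominated_linear_graph S G"
    and tot: "\<And>X Y. X \<in> \<C> \<Longrightarrow> Y \<in> \<C> \<Longrightarrow> X \<subseteq> Y \<or> Y \<subseteq> X"
    using assms(2) by (auto simp: subset_chain_def)
  show "\<Union>\<C> \<subseteq> S \<times> UNIV"
    using L dominated_linear_graph_subset by (fastforce simp: subset_iff)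
  show "(c *\<^sub>R a, c * u) \<in> \<Union>\<C>" if "(a, u) \<in> \<Union>\<C>" for a u c
    using that L dominated_linear_graph_scale by (meson UnionE UnionI)
  show "u \<le> norm a" if "(a, u) \<in> \<Union>\<C>" for a u
    using that L dominated_linear_graph_le_norm by (meson UnionE)
  fix a u b v assume "(a, u) \<in> \<Union>\<C>" "(b, v) \<in> \<Union>\<C>"
  then obtain X Y where XY: "X \<in> \<C>" "Y \<in> \<C>" "(a, u) \<in> X" "(b, v) \<in> Y" by blast
  then have "(a, u) \<in> X \<union> Y" "(b, v) \<in> X \<union> Y" "X \<union> Y \<in> \<C>"
    using tot[OF XY(1,2)] by (auto simp: sup_absorb1 sup_absorb2)
  then show "(a + b, u + v) \<in> \<Union>\<C>"
    using L dominated_linear_graph_add by blast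
qed

lemma dominated_linear_graph_total:
  fixes S :: "'a::real_normed_vector set"
  assumes S: "subspace S" and x0: "x0 \<in> S"
  obtains M where "dominated_linear_graph S M" "(x0, norm x0) \<in> M"
    and "\<And>x. x \<in> S \<Longrightarrow> \<exists>u. (x, u) \<in> M"
proof -
  define \<A> where "\<A> = {G. dominated_linear_graph S G \<and> (x0, norm x0) \<in> G}"
  define G0 where "G0 = range (\<lambda>t. (t *\<^sub>R x0, t * norm x0))"
  have "dominated_linear_graph S G0"
    unfolding dominated_linear_graph_def G0_def
    using S x0 by (auto simp: subspace_scale algebra_simps mult_right_mono
        intro: image_eqI[where x = "_ + _"] image_eqI[where x = "_ * _"])
  moreover have "(x0, norm x0) \<in> G0" unfolding G0_def by (auto intro: image_eqI[where x = 1])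
  ultimately have "\<A> \<noteq> {}" unfolding \<A>_def by blast
  then have "\<exists>M\<in>\<A>. \<forall>X\<in>\<A>. M \<subseteq> X \<longrightarrow> X = M"
  proof (rule subset_Zorn_nonempty)
    fix \<C> assume "\<C> \<noteq> {}" "subset.chain \<A> \<C>"
    moreover from this have "subset.chain {G. dominated_linear_graph S G} \<C>"
      by (auto simp: subset_chain_def \<A>_def)
    then have "dominated_linear_graph S (\<Union>\<C>)"
      using \<open>\<C> \<noteq> {}\<close> by (rule dominated_linear_graph_chain_Union[rotated])
    moreover have "(x0, norm x0) \<in> \<Union>\<C>"
      using \<open>\<C> \<noteq> {}\<close> \<open>subset.chain \<A> \<C>\<close> by (auto simp: subset_chain_def \<A>_def)
    ultimately show "\<Union>\<C> \<in> \<A>" unfolding \<A>_def by blast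
  qed
  then obtain M where "M \<in> \<A>" and max: "\<And>X. X \<in> \<A> \<Longrightarrow> M \<subseteq> X \<Longrightarrow> X = M"
    by blast
  then have M: "dominated_linear_graph S M" and Mx0: "(x0, norm x0) \<in> M"
    unfolding \<A>_def by auto
  have "\<exists>u. (x, u) \<in> M" if "x \<in> S" for x
  proof (rule ccontr)
    assume "\<nexists>u. (x, u) \<in> M"
    then have "x \<notin> fst ` M" by force
    with dominated_linear_graph_extend[OF M S that] Mx0 obtain G'
      where "dominated_linear_graph S G'" "M \<subset> G'" by blast
    moreover from this Mx0 have "G' \<in> \<A>" unfolding \<A>_def by blast
    ultimately show False using max by blast
  qed
  with M Mx0 show ?thesis by (rule that)
qed

lemma hahn_banach_norming_functional:
  fixes S :: "'a::real_normed_vector set"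
  assumes "subspace S" "x0 \<in> S"
  obtains f where "f \<in> dual_ball scaleR S" "f x0 = norm x0"
proof -
  obtain M where M: "dominated_linear_graph S M" and Mx0: "(x0, norm x0) \<in> M"
    and total: "\<And>x. x \<in> S \<Longrightarrow> \<exists>u. (x, u) \<in> M"
    using dominated_linear_graph_total[OF assms] by blast
  define f where "f x = (THE u. (x, u) \<in> M)" for x
  have f_eq: "f x = u" if "(x, u) \<in> M" for x u
    unfolding f_def using that dominated_linear_graph_unique[OF M _ that] by (rule the_equality)
  have f_graph: "(x, f x) \<in> M" if "x \<in> S" for x
    using total[OF that] f_eq by auto
  have "\<bar>f x\<bar> \<le> norm x" if "x \<in> S" for x
    using dominated_linear_graph_le_norm[OF M f_graph[OF that]]
      dominated_linear_graph_le_norm[OF M dominated_linear_graph_scale[OF M f_graph[OF that], of "- 1"]]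
    by simp
  then have "f \<in> dual_ball scaleR S"
    unfolding dual_ball_def
    using f_eq dominated_linear_graph_add[OF M] dominated_linear_graph_scale[OF M] f_graph
    by simp
  moreover have "f x0 = norm x0" using f_eq[OF Mx0] .
  ultimately show ?thesis by (rule that)
qed

definition norming_dual_ball :: "('k::real_normed_field \<Rightarrow> 'a::real_normed_vector \<Rightarrow> 'a) \<Rightarrow> 'a set \<Rightarrow> bool" where
  "norming_dual_ball sm S \<longleftrightarrow> (\<forall>x\<in>S. \<exists>\<phi>\<in>dual_ball sm S. norm x \<le> norm (\<phi> x))"

lemma kscal_scaleR: "kscal (scaleR :: real \<Rightarrow> 'a::real_normed_vector \<Rightarrow> 'a)"
  by (simp add: kscal_def scaleR_add_right scaleR_add_left)

lemma ksubspace_imp_subspace: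
  assumes "kscal sm" "ksubspace sm S" shows "subspace S"
  using assms unfolding kscal_def ksubspace_def subspace_def by metis

lemma norming_dual_ball_real:
  fixes S :: "'a::real_normed_vector set"
  assumes "subspace S" shows "norming_dual_ball scaleR S"
  unfolding norming_dual_ball_def
proof
  fix x assume "x \<in> S"
  with assms obtain f where "f \<in> dual_ball scaleR S" "f x = norm x"
    by (rule hahn_banach_norming_functional)
  then show "\<exists>\<phi>\<in>dual_ball scaleR S. norm x \<le> norm (\<phi> x)" by force
qed

lemma kscal_decompose:
  fixes sm :: "complex \<Rightarrow> 'a::real_normed_vector \<Rightarrow> 'a"
  assumes "kscal sm"
  shows "sm c x = Re c *\<^sub>R x + Im c *\<^sub>R sm \<i> x"
proof -
  have r: "\<And>r x. sm (of_real r) x = r *\<^sub>R x"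
    and da: "\<And>a b x. sm (a + b) x = sm a x + sm b x"
    and cp: "\<And>a b x. sm a (sm b x) = sm (a * b) x"
    using assms unfolding kscal_def by blast+
  have "sm c x = sm (of_real (Re c)) x + sm (of_real (Im c) * \<i>) x"
    by (subst complex_eq[of c]) (simp add: da mult.commute)
  also have "sm (of_real (Im c) * \<i>) x = Im c *\<^sub>R sm \<i> x" by (metis cp r)
  finally show ?thesis by (simp add: r)
qed

lemma complexification_in_dual_ball:
  fixes sm :: "complex \<Rightarrow> 'a::real_normed_vector \<Rightarrow> 'a"
  assumes ks: "kscal sm" and sub: "ksubspace sm S" and f: "f \<in> dual_ball scaleR S"
  shows "(\<lambda>x. of_real (f x) - \<i> * of_real (f (sm \<i> x))) \<in> dual_ball sm S"
proof -
  define \<phi> where "\<phi> x = complex_of_real (f x) - \<i> * complex_of_real (f (sm \<i> x))" for x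
  have ad: "\<And>a x y. sm a (x + y) = sm a x + sm a y"
    and cp: "\<And>a b x. sm a (sm b x) = sm (a * b) x"
    and nm: "\<And>a x. norm (sm a x) = norm a * norm x"
    using ks unfolding kscal_def by blast+
  have S: "subspace S" using ksubspace_imp_subspace[OF ks sub] .
  have Ssm: "\<And>c x. x \<in> S \<Longrightarrow> sm c x \<in> S" using sub unfolding ksubspace_def by blast
  have fadd: "\<And>x y. x \<in> S \<Longrightarrow> y \<in> S \<Longrightarrow> f (x + y) = f x + f y"
    and fsc: "\<And>c x. x \<in> S \<Longrightarrow> f (c *\<^sub>R x) = c * f x"
    and fn: "\<And>x. x \<in> S \<Longrightarrow> \<bar>f x\<bar> \<le> norm x"
    using f unfolding dual_ball_def by auto
  have fsm: "f (sm c x) = Re c * f x + Im c * f (sm \<i> x)" if "x \<in> S" for c x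
  proof -
    have "Re c *\<^sub>R x \<in> S" "Im c *\<^sub>R sm \<i> x \<in> S"
      using that Ssm subspace_scale[OF S] by auto
    then show ?thesis
      unfolding kscal_decompose[OF ks, of c x] using that Ssm by (simp add: fadd fsc)
  qed
  have hom: "\<phi> (sm c x) = c * \<phi> x" if "x \<in> S" for c x
  proof -
    have "f (sm \<i> (sm c x)) = - Im c * f x + Re c * f (sm \<i> x)"
      using fsm[OF that, of "\<i> * c"] by (simp add: cp)
    then show ?thesis unfolding \<phi>_def using fsm[OF that, of c]
      by (simp add: complex_eq_iff algebra_simps)
  qed
  have add: "\<phi> (x + y) = \<phi> x + \<phi> y" if "x \<in> S" "y \<in> S" for x y
    unfolding \<phi>_def using that Ssm by (simp add: ad fadd algebra_simps)
  text \<open>Rotating \<open>x\<close> by the phase of \<open>\<phi> x\<close> makes \<open>\<phi>\<close> real there, where it agrees with \<open>f\<close>.\<close>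
  have bound: "norm (\<phi> x) \<le> norm x" if x: "x \<in> S" for x
  proof (cases "\<phi> x = 0")
    case False
    define w where "w = cnj (\<phi> x) / cmod (\<phi> x)"
    have "cmod w = 1" using False unfolding w_def by (simp add: norm_divide)
    have "\<phi> x * cnj (\<phi> x) = of_real (cmod (\<phi> x)) * of_real (cmod (\<phi> x))"
      by (metis complex_norm_square of_real_mult power2_eq_square)
    then have "\<phi> (sm w x) = of_real (cmod (\<phi> x))"
      using False by (simp add: hom[OF x] w_def mult.commute[of "cnj _"])
    moreover have "Re (\<phi> (sm w x)) = f (sm w x)" unfolding \<phi>_def by simp
    ultimately have "cmod (\<phi> x) = f (sm w x)" by simp
    also have "\<dots> \<le> norm (sm w x)" using fn[OF Ssm[OF x, of w]] by simp
    also have "\<dots> = norm x" using nm \<open>cmod w = 1\<close> by simp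
    finally show ?thesis .
  qed simp
  show ?thesis
    using add hom bound unfolding dual_ball_def \<phi>_def[symmetric] by blast
qed

lemma norming_dual_ball_complex:
  fixes sm :: "complex \<Rightarrow> 'a::real_normed_vector \<Rightarrow> 'a"
  assumes "kscal sm" "ksubspace sm S" shows "norming_dual_ball sm S"
  unfolding norming_dual_ball_def
proof
  fix x assume "x \<in> S"
  with ksubspace_imp_subspace[OF assms] obtain f where f: "f \<in> dual_ball scaleR S" "f x = norm x"
    by (rule hahn_banach_norming_functional)
  let ?\<phi> = "\<lambda>x. of_real (f x) - \<i> * of_real (f (sm \<i> x))"
  have "norm x = Re (?\<phi> x)" using f(2) by simp
  also have "\<dots> \<le> norm (?\<phi> x)" by (rule complex_Re_le_cmod)
  finally show "\<exists>\<phi>\<in>dual_ball sm S. norm x \<le> norm (\<phi> x)"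
    using complexification_in_dual_ball[OF assms f(1)] by (intro bexI[of _ ?\<phi>])
qed

lemma norm_le_weak_norm:
  assumes norming: "norming_dual_ball sm S" and xs: "\<forall>j<n. xs j \<in> S"
    and "k < n" and "q > 0"
  shows "norm (xs k) \<le> weak_norm sm S q xs n"
proof -
  let ?g = "\<lambda>\<psi>. (\<Sum>j<n. norm (\<psi> (xs j)) powr q) powr (1 / q)"
  obtain \<phi> where \<phi>: "\<phi> \<in> dual_ball sm S" "norm (xs k) \<le> norm (\<phi> (xs k))"
    using norming xs \<open>k < n\<close> unfolding norming_dual_ball_def by blast
  have "bdd_above (?g ` dual_ball sm S)"
  proof (rule bdd_aboveI2)
    fix \<psi> assume "\<psi> \<in> dual_ball sm S"
    then have "norm (\<psi> (xs j)) \<le> norm (xs j)" if "j < n" for j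
      using xs that unfolding dual_ball_def by blast
    then have "(\<Sum>j<n. norm (\<psi> (xs j)) powr q) \<le> (\<Sum>j<n. norm (xs j) powr q)"
      using \<open>q > 0\<close> by (intro sum_mono powr_mono2) simp_all
    then show "?g \<psi> \<le> (\<Sum>j<n. norm (xs j) powr q) powr (1 / q)"
      using \<open>q > 0\<close> by (intro powr_mono2) (auto intro: sum_nonneg)
  qed
  have "norm (xs k) \<le> (norm (\<phi> (xs k)) powr q) powr (1 / q)"
    using \<phi>(2) \<open>q > 0\<close> by (simp add: powr_powr)
  also have "\<dots> \<le> ?g \<phi>"
    using \<open>q > 0\<close> \<open>k < n\<close> by (intro powr_mono2 member_le_sum) auto
  also have "\<dots> \<le> weak_norm sm S q xs n"
    unfolding weak_norm_def using \<phi>(1) \<open>bdd_above _\<close> by (rule cSUP_upper)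
  finally show ?thesis .
qed

lemma sum_powr_root_le_card:
  fixes f :: "'i \<Rightarrow> real"
  assumes "finite A" "p > 0" and f: "\<And>k. k \<in> A \<Longrightarrow> 0 \<le> f k \<and> f k \<le> B"
  shows "(\<Sum>k\<in>A. f k powr p) powr (1 / p) \<le> real (card A) powr (1 / p) * B"
proof (cases "A = {}")
  case False
  then have "B \<ge> 0" using f by fastforce
  have "(\<Sum>k\<in>A. f k powr p) \<le> real (card A) * B powr p"
    using f \<open>p > 0\<close> by (intro sum_bounded_above powr_mono2) auto
  then have "(\<Sum>k\<in>A. f k powr p) powr (1 / p) \<le> (real (card A) * B powr p) powr (1 / p)"
    using \<open>p > 0\<close> by (intro powr_mono2) (auto intro: sum_nonneg)
  also have "\<dots> = real (card A) powr (1 / p) * B"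
    using \<open>p > 0\<close> \<open>B \<ge> 0\<close> by (simp add: powr_mult powr_powr)
  finally show ?thesis .
qed simp

lemma multilinear_sum_le_weak_norms:
  fixes m n :: nat and p q C :: real
  assumes norming: "\<forall>i<m. norming_dual_ball sm (E i)"
    and "p > 0" "q > 0" "C \<ge> 0"
    and T: "\<And>x. x \<in> PiE {..<m} E \<Longrightarrow> norm (T x) \<le> C * (\<Prod>i<m. norm (x i))"
    and "n \<ge> 1" and xs: "\<forall>i<m. \<forall>k<n. xs i k \<in> E i"
  shows "(\<Sum>k\<in>PiE {..<m} (\<lambda>_. {..<n}). norm (T (\<lambda>i\<in>{..<m}. xs i (k i))) powr p) powr (1 / p)
           \<le> C * real n powr (m / p) * (\<Prod>i<m. weak_norm sm (E i) q (xs i) n)"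
proof -
  let ?W = "\<lambda>i. weak_norm sm (E i) q (xs i) n"
  have term_le: "norm (T (\<lambda>i\<in>{..<m}. xs i (k i))) \<le> C * (\<Prod>i<m. ?W i)"
    if "k \<in> PiE {..<m} (\<lambda>_. {..<n})" for k
  proof -
    have k: "\<And>i. i < m \<Longrightarrow> k i < n" using that by auto
    have "norm (T (\<lambda>i\<in>{..<m}. xs i (k i))) \<le> C * (\<Prod>i<m. norm (xs i (k i)))"
      using T[of "\<lambda>i\<in>{..<m}. xs i (k i)"] k xs by simp
    also have "\<dots> \<le> C * (\<Prod>i<m. ?W i)"
      using k xs norming norm_le_weak_norm[of sm "E _"] \<open>q > 0\<close> \<open>C \<ge> 0\<close>
      by (intro mult_left_mono prod_mono) auto
    finally show ?thesis .
  qed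
  have "(\<Sum>k\<in>PiE {..<m} (\<lambda>_. {..<n}). norm (T (\<lambda>i\<in>{..<m}. xs i (k i))) powr p) powr (1 / p)
          \<le> real (card (PiE {..<m} (\<lambda>_. {..<n}))) powr (1 / p) * (C * (\<Prod>i<m. ?W i))"
    by (rule sum_powr_root_le_card[OF _ \<open>p > 0\<close>]) (simp_all add: term_le finite_PiE)
  also have "real (card (PiE {..<m} (\<lambda>_. {..<n}))) powr (1 / p) = real n powr (m / p)"
    using \<open>n \<ge> 1\<close> by (simp add: card_PiE powr_realpow[symmetric] powr_powr)
  finally show ?thesis by (simp only: mult_ac)
qed

lemma eta_mult_le_m_div_p:
  fixes m :: nat and p q :: real
  assumes norming: "\<forall>i<m. norming_dual_ball sm (E i)" and "p > 0" "q > 0"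
  shows "eta_mult sm E smF m p q \<le> ereal (m / p)"
  unfolding eta_mult_def
proof (rule Inf_lower, rule imageI, intro CollectI allI impI)
  fix T assume "bounded_mlinear sm E m smF T"
  then have "\<exists>C. \<forall>x\<in>PiE {..<m} E. norm (T x) \<le> C * (\<Prod>i<m. norm (x i))"
    unfolding bounded_mlinear_def by (rule conjunct2[THEN conjunct2])
  then obtain C where C: "\<And>x. x \<in> PiE {..<m} E \<Longrightarrow> norm (T x) \<le> C * (\<Prod>i<m. norm (x i))"
    by blast
  have C': "norm (T x) \<le> max C 0 * (\<Prod>i<m. norm (x i))" if "x \<in> PiE {..<m} E" for x
  proof -
    have "C * (\<Prod>i<m. norm (x i)) \<le> max C 0 * (\<Prod>i<m. norm (x i))"
      by (intro mult_right_mono prod_nonneg) auto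
    then show ?thesis using C[OF that] by linarith
  qed
  show "\<exists>C\<ge>0. \<forall>n xs. n \<ge> 1 \<longrightarrow> (\<forall>i<m. \<forall>k<n. xs i k \<in> E i) \<longrightarrow>
          (\<Sum>k\<in>PiE {..<m} (\<lambda>_. {..<n}). norm (T (\<lambda>i\<in>{..<m}. xs i (k i))) powr p) powr (1 / p)
            \<le> C * real n powr (m / p) * (\<Prod>i<m. weak_norm sm (E i) q (xs i) n)"
  proof (intro exI[of _ "max C 0"] conjI allI impI)
    fix n :: nat and xs assume "n \<ge> 1" and xs: "\<forall>i<m. \<forall>k<n. xs i k \<in> E i"
    show "(\<Sum>k\<in>PiE {..<m} (\<lambda>_. {..<n}). norm (T (\<lambda>i\<in>{..<m}. xs i (k i))) powr p) powr (1 / p)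
            \<le> max C 0 * real n powr (m / p) * (\<Prod>i<m. weak_norm sm (E i) q (xs i) n)"
      by (rule multilinear_sum_le_weak_norms
          [OF norming \<open>p > 0\<close> \<open>q > 0\<close> max.cobounded2 C' \<open>n \<ge> 1\<close> xs])
  qed simp
qed

theorem mainTheorem4:
  fixes m :: nat and p q :: real and E :: "nat \<Rightarrow> 'a::banach set"
  assumes "1 \<le> q" and "q \<le> p" and "1 \<le> m"
  shows "(banach_family (scaleR :: real \<Rightarrow> 'a \<Rightarrow> 'a) E m \<longrightarrow>
            (q \<le> 2 \<longrightarrow> eta_mult (scaleR :: real \<Rightarrow> 'a \<Rightarrow> 'a) E (scaleR :: real \<Rightarrow> 'b::banach \<Rightarrow> 'b) m p q \<le> ereal (m / p)) \<and>
            (q \<ge> 2 \<longrightarrow> eta_mult (scaleR :: real \<Rightarrow> 'a \<Rightarrow> 'a) E (scaleR :: real \<Rightarrow> 'b \<Rightarrow> 'b) m p q \<le> ereal (m * q / (2 * p))))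
       \<and> (\<forall>(smE :: complex \<Rightarrow> 'a \<Rightarrow> 'a) (smF :: complex \<Rightarrow> 'b \<Rightarrow> 'b).
            banach_family smE E m \<and> kscal smF \<longrightarrow>
            (q \<le> 2 \<longrightarrow> eta_mult smE E smF m p q \<le> ereal (m / p)) \<and>
            (q \<ge> 2 \<longrightarrow> eta_mult smE E smF m p q \<le> ereal (m * q / (2 * p))))"
proof -
  have "p > 0" "q > 0" using assms by auto
  have weaker: "ereal (m / p) \<le> ereal (m * q / (2 * p))" if "q \<ge> 2"
    using that \<open>p > 0\<close> mult_left_mono[of 1 "q / 2" "m / p"] by simp
  have real: "eta_mult scaleR E (smF :: real \<Rightarrow> 'b \<Rightarrow> 'b) m p q \<le> ereal (m / p)"
    if "banach_family (scaleR :: real \<Rightarrow> 'a \<Rightarrow> 'a) E m" for smF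
    using that \<open>p > 0\<close> \<open>q > 0\<close> kscal_scaleR
    by (intro eta_mult_le_m_div_p allI impI norming_dual_ball_real ksubspace_imp_subspace)
      (auto simp: banach_family_def)
  have complex: "eta_mult smE E (smF :: complex \<Rightarrow> 'b \<Rightarrow> 'b) m p q \<le> ereal (m / p)"
    if "banach_family (smE :: complex \<Rightarrow> 'a \<Rightarrow> 'a) E m" for smE smF
    using that \<open>p > 0\<close> \<open>q > 0\<close>
    by (intro eta_mult_le_m_div_p allI impI norming_dual_ball_complex) (auto simp: banach_family_def)
  show ?thesis
    using real complex weaker order_trans by blast
qed

end
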